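(* Let $\mathcal L$ be a finite atomic lattice with atoms $A_1,\dots,A_n$ and $\mathcal G$ a building set in $\mathcal L$. Then the polyhedral fan $\Sigma(\mathcal L,\mathcal G)=\{V(\mathcal S):\mathcal S \text{ nested in }\mathcal G\}$ in $\mathbb R^n$ is unimodular, i.e. for every nested set $\mathcal S$ the set $\{v_X: X\in\mathcal S\}$ can be extended to a basis of the lattice $\mathbb Z^n$.
   Context: A lattice is a finite poset in which every subset has a join $\vee$ and a meet; $\hat0$ is its least element; atomic means every element is a join of atoms. For $X\le Y$ write $[X,Y]=\{Z:X\le Z\le Y\}$ and $\mathcal G_{\le X}=\{G\in\mathcal G:G\le X\}$. A subset $\mathcal G\subseteq\mathcal L\setminus\{\hat0\}$ is a building set if for every $X\ne\hat0$, with $\{G_1,\dots,G_k\}$ the maximal elements of $\mathcal G_{\le X}$, there is a poset isomorphism $\prod_{i=1}^k[\hat0,G_i]\to[\hat0,X]$ sending $(\hat0,\dots,G_i,\dots,\hat0)$ to $G_i$. A subset $\mathcal S\subseteq\mathcal G$ is nested if for every set of pairwise incomparable $G_1,\dots,G_t\in\mathcal S$, $t\ge2$, $G_1\vee\dots\vee G_t\notin\mathcal G$. For $X\in\mathcal L$, $v_X\in\mathbb R^n$ is the vector with $i$-th coordinate $1$ if $A_i\le X$ and $0$ otherwise; for $\mathcal S\subseteq\mathcal L$, $V(\mathcal S)$ is the cone spanned by $\{v_X:X\in\mathcal S\}$. *)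

theory Defs
  imports Main
begin

text \<open>The finite lattice is modelled as a finite type of class complete_lattice
  (every finite nonempty lattice is complete); bot is the least element.\<close>

definition is_atom :: "'a::complete_lattice \<Rightarrow> bool" where
  "is_atom a \<longleftrightarrow> bot < a \<and> \<not> (\<exists>z. bot < z \<and> z < a)"

definition atomic_lattice :: "'a::complete_lattice itself \<Rightarrow> bool" where
  "atomic_lattice _ \<longleftrightarrow> (\<forall>X::'a. X = Sup {a. is_atom a \<and> a \<le> X})"

definition maximal_below :: "'a::complete_lattice set \<Rightarrow> 'a \<Rightarrow> 'a set" where
  "maximal_below G X = {g \<in> G. g \<le> X \<and> \<not> (\<exists>h\<in>G. h \<le> X \<and> g < h)}"

text \<open>Product of intervals [bot, g], g in M, as functions M -> 'a (bot outside M),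
  ordered componentwise.\<close>
definition interval_product :: "'a::complete_lattice set \<Rightarrow> ('a \<Rightarrow> 'a) set" where
  "interval_product M = {t. (\<forall>g\<in>M. t g \<le> g) \<and> (\<forall>g. g \<notin> M \<longrightarrow> t g = bot)}"

definition building_set :: "'a::complete_lattice set \<Rightarrow> bool" where
  "building_set G \<longleftrightarrow> bot \<notin> G \<and>
     (\<forall>X. X \<noteq> bot \<longrightarrow>
        (\<exists>f. bij_betw f (interval_product (maximal_below G X)) {Z. bot \<le> Z \<and> Z \<le> X}
           \<and> (\<forall>s\<in>interval_product (maximal_below G X). \<forall>t\<in>interval_product (maximal_below G X).
                 s \<le> t \<longleftrightarrow> f s \<le> f t)
           \<and> (\<forall>g\<in>maximal_below G X. f ((\<lambda>_. bot)(g := g)) = g)))"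

definition nested :: "'a::complete_lattice set \<Rightarrow> 'a set \<Rightarrow> bool" where
  "nested G S \<longleftrightarrow> S \<subseteq> G \<and>
     (\<forall>T \<subseteq> S. 2 \<le> card T \<and> (\<forall>x\<in>T. \<forall>y\<in>T. x \<noteq> y \<longrightarrow> \<not> x \<le> y)
        \<longrightarrow> Sup T \<notin> G)"

text \<open>v_X in Z^n (vectors are nat => int, zero at indices >= n); A enumerates the atoms
  as A 0, ..., A (n-1).\<close>
definition vvec :: "(nat \<Rightarrow> 'a::complete_lattice) \<Rightarrow> nat \<Rightarrow> 'a \<Rightarrow> nat \<Rightarrow> int" where
  "vvec A n X = (\<lambda>i. if i < n \<and> A i \<le> X then 1 else 0)"

definition zvec :: "nat \<Rightarrow> (nat \<Rightarrow> int) set" where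
  "zvec n = {w. \<forall>i\<ge>n. w i = 0}"

definition zbasis :: "nat \<Rightarrow> (nat \<Rightarrow> int) set \<Rightarrow> bool" where
  "zbasis n B \<longleftrightarrow> finite B \<and> B \<subseteq> zvec n \<and>
     (\<forall>c. (\<forall>i. (\<Sum>b\<in>B. c b * b i) = 0) \<longrightarrow> (\<forall>b\<in>B. c b = 0)) \<and>
     (\<forall>w\<in>zvec n. \<exists>c. w = (\<lambda>i. \<Sum>b\<in>B. c b * b i))"

end

theory Submission
  imports Defs
begin

(* Every element Y of a nested set S has a private atom, lying below Y but below no smaller
   element of S: otherwise Y would be the join of the antichain of maximal elements of S below
   it, which nestedness excludes. Two elements of S sharing an atom are comparable, since distinct
   maximal elements of the building set below a join meet only in bot. So if the private atom of
   Y' lies below Y, then Y' <= Y. Indexing the vectors v_Y by their private atoms and completing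
   with unit vectors for the remaining atoms gives a unitriangular integer matrix, hence a basis
   of Z^n. *)

definition lin_comb :: "nat \<Rightarrow> (nat \<Rightarrow> int) \<Rightarrow> (nat \<Rightarrow> nat \<Rightarrow> int) \<Rightarrow> nat \<Rightarrow> int" where
  "lin_comb n c v = (\<lambda>l. \<Sum>k<n. c k * v k l)"

definition int_span :: "nat \<Rightarrow> (nat \<Rightarrow> nat \<Rightarrow> int) \<Rightarrow> (nat \<Rightarrow> int) set" where
  "int_span n v = range (\<lambda>c. lin_comb n c v)"

definition unit_vec :: "nat \<Rightarrow> nat \<Rightarrow> int" where
  "unit_vec k = (\<lambda>l. if l = k then 1 else 0)"

lemma lin_comb_unit_vec: "lin_comb n c unit_vec = (\<lambda>l. if l < n then c l else 0)"
proof -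
  have "c k * unit_vec k l = (if k = l then c k else 0)" for k l
    by (simp add: unit_vec_def)
  then show ?thesis
    by (simp add: lin_comb_def fun_eq_iff)
qed

lemma zvec_eq_lin_comb_unit_vec: "w \<in> zvec n \<Longrightarrow> w = lin_comb n w unit_vec"
  by (auto simp: lin_comb_unit_vec zvec_def fun_eq_iff)

lemma mem_int_span: "k < n \<Longrightarrow> v k \<in> int_span n v"
proof -
  assume "k < n"
  moreover have "unit_vec k i * v i l = (if i = k then v k l else 0)" for i l
    by (simp add: unit_vec_def)
  ultimately have "lin_comb n (unit_vec k) v = v k"
    by (simp add: lin_comb_def fun_eq_iff)
  then show ?thesis
    unfolding int_span_def by (metis rangeI)
qed

lemma diff_mem_int_span:
  assumes "x \<in> int_span n v" "y \<in> int_span n v"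
  shows "x - y \<in> int_span n v"
proof -
  obtain c d where "x = lin_comb n c v" "y = lin_comb n d v"
    using assms unfolding int_span_def by blast
  then have "x - y = lin_comb n (c - d) v"
    by (simp add: lin_comb_def fun_eq_iff left_diff_distrib sum_subtractf)
  then show ?thesis
    unfolding int_span_def by blast
qed

lemma lin_comb_mem_int_span:
  assumes "\<And>k. k < n \<Longrightarrow> c k \<noteq> 0 \<Longrightarrow> w k \<in> int_span n v"
  shows "lin_comb n c w \<in> int_span n v"
proof -
  have "\<forall>k. \<exists>d. k < n \<and> c k \<noteq> 0 \<longrightarrow> w k = lin_comb n d v"
    using assms unfolding int_span_def by blast
  then obtain E where E: "\<And>k. k < n \<Longrightarrow> c k \<noteq> 0 \<Longrightarrow> w k = lin_comb n (E k) v"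
    by metis
  have "lin_comb n c w l = (\<Sum>k<n. \<Sum>i<n. c k * (E k i * v i l))" for l
  proof -
    have "c k * w k l = c k * lin_comb n (E k) v l" if "k < n" for k
      using E[OF that] by (cases "c k = 0") auto
    then show ?thesis
      by (simp add: lin_comb_def sum_distrib_left)
  qed
  also have "(\<Sum>k<n. \<Sum>i<n. c k * (E k i * v i l)) = lin_comb n (\<lambda>i. \<Sum>k<n. c k * E k i) v l" for l
    by (subst sum.swap) (simp add: lin_comb_def sum_distrib_right mult.assoc)
  finally have "lin_comb n c w = lin_comb n (\<lambda>i. \<Sum>k<n. c k * E k i) v"
    by (rule ext)
  then show ?thesis
    unfolding int_span_def by blast
qed

locale unitriangular =
  fixes n :: nat and u :: "nat \<Rightarrow> nat \<Rightarrow> int" and r :: "nat \<Rightarrow> nat"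
  assumes support: "i < n \<Longrightarrow> u i \<in> zvec n"
    and diag: "i < n \<Longrightarrow> u i i = 1"
    and off_diag: "i < n \<Longrightarrow> j < n \<Longrightarrow> j \<noteq> i \<Longrightarrow> u i j \<noteq> 0 \<Longrightarrow> r j < r i"
begin

lemma unit_vec_mem_int_span: "k < n \<Longrightarrow> unit_vec k \<in> int_span n u"
proof (induction "r k" arbitrary: k rule: less_induct)
  case less
  define c where "c j = (if j = k then 0 else u k j)" for j
  have "unit_vec k = u k - lin_comb n c unit_vec"
    using less.prems support[OF less.prems] diag[OF less.prems]
    by (auto simp: fun_eq_iff lin_comb_unit_vec unit_vec_def c_def zvec_def)
  moreover have "lin_comb n c unit_vec \<in> int_span n u"
    using less by (intro lin_comb_mem_int_span) (auto simp: c_def off_diag split: if_splits)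
  ultimately show ?case
    using diff_mem_int_span mem_int_span less.prems by metis
qed

lemma zvec_subset_int_span: "zvec n \<subseteq> int_span n u"
proof
  fix w assume "w \<in> zvec n"
  then have "w = lin_comb n w unit_vec"
    by (rule zvec_eq_lin_comb_unit_vec)
  also have "\<dots> \<in> int_span n u"
    by (intro lin_comb_mem_int_span unit_vec_mem_int_span)
  finally show "w \<in> int_span n u" .
qed

lemma lin_comb_eq_0D:
  assumes "lin_comb n c u = (\<lambda>_. 0)" and "i < n"
  shows "c i = 0"
proof (rule ccontr)
  define D where "D = {j. j < n \<and> c j \<noteq> 0}"
  assume "c i \<noteq> 0"
  then have "D \<noteq> {}" using \<open>i < n\<close> by (auto simp: D_def)
  moreover have "finite D" by (simp add: D_def)
  ultimately have "Max (r ` D) \<in> r ` D"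
    by simp
  then obtain k where k: "Max (r ` D) = r k" "k \<in> D"
    by (rule imageE)
  have k_max: "r j \<le> r k" if "j \<in> D" for j
    using Max_ge[of "r ` D" "r j"] \<open>finite D\<close> k that by simp
  have off_terms: "c j * u j k = 0" if "j \<in> {..<n} - {k}" for j
  proof (rule ccontr)
    assume "c j * u j k \<noteq> 0"
    then have "j \<in> D" "r k < r j"
      using that k off_diag[of j k] by (auto simp: D_def)
    then show False
      using k_max by fastforce
  qed
  have "lin_comb n c u k = c k * u k k + (\<Sum>j\<in>{..<n} - {k}. c j * u j k)"
    using k sum.remove[of "{..<n}" k "\<lambda>j. c j * u j k"] unfolding lin_comb_def D_def by simp
  also have "\<dots> = c k * u k k"
    using off_terms by (simp add: sum.neutral)
  finally have "lin_comb n c u k = c k * u k k" .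
  then show False
    using assms(1) k diag by (simp add: D_def)
qed

lemma inj_on_u: "inj_on u {..<n}"
proof (rule inj_onI, rule ccontr)
  fix i j assume "i \<in> {..<n}" "j \<in> {..<n}" "u i = u j" "i \<noteq> j"
  then have "r i < r j" "r j < r i"
    using diag off_diag by (metis lessThan_iff zero_neq_one)+
  then show False by simp
qed

lemma zbasis_image: "zbasis n (u ` {..<n})"
proof -
  have reindex: "(\<Sum>b\<in>u ` {..<n}. c b * b l) = lin_comb n (c \<circ> u) u l" for c l
    by (simp add: lin_comb_def sum.reindex[OF inj_on_u])
  have "\<forall>b\<in>u ` {..<n}. c b = 0" if "\<forall>l. (\<Sum>b\<in>u ` {..<n}. c b * b l) = 0" for c
    using that lin_comb_eq_0D[of "c \<circ> u"] by (auto simp: reindex fun_eq_iff)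
  moreover have "\<exists>c. w = (\<lambda>l. \<Sum>b\<in>u ` {..<n}. c b * b l)" if w: "w \<in> zvec n" for w
  proof -
    obtain d where d: "w = lin_comb n d u"
      using w zvec_subset_int_span unfolding int_span_def by blast
    have "lin_comb n (d \<circ> inv_into {..<n} u \<circ> u) u = lin_comb n d u"
      unfolding lin_comb_def using inv_into_f_f[OF inj_on_u] by simp
    then show ?thesis
      using d by (metis reindex)
  qed
  moreover have "u ` {..<n} \<subseteq> zvec n"
    using support by blast
  ultimately show ?thesis
    unfolding zbasis_def by blast
qed

end

lemma card_down_set_strict_mono:
  fixes S :: "'a::order set"
  assumes "finite S" "X \<in> S" "X < Y"
  shows "card {Z\<in>S. Z < X} < card {Z\<in>S. Z < Y}"
  using assms by (intro psubset_card_mono) (auto intro: less_trans)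

locale triangular_family =
  fixes n :: nat and S :: "'a::order set" and p :: "'a \<Rightarrow> nat" and v :: "'a \<Rightarrow> nat \<Rightarrow> int"
  assumes finite: "finite S" and p_range: "p ` S \<subseteq> {..<n}"
    and v_zvec: "Y \<in> S \<Longrightarrow> v Y \<in> zvec n"
    and v_diag: "Y \<in> S \<Longrightarrow> v Y (p Y) = 1"
    and v_off_diag: "Y \<in> S \<Longrightarrow> Y' \<in> S \<Longrightarrow> v Y (p Y') \<noteq> 0 \<Longrightarrow> Y' \<le> Y"
begin

lemma inj_on_p: "inj_on p S"
  by (rule inj_onI) (metis order.antisym v_diag v_off_diag zero_neq_one)

lemma inv_into_p [simp]: "Y \<in> S \<Longrightarrow> inv_into S p (p Y) = Y"
  using inj_on_p by simp

definition row :: "nat \<Rightarrow> nat \<Rightarrow> int" where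
  "row i = (if i \<in> p ` S then v (inv_into S p i) else unit_vec i)"

definition rank :: "nat \<Rightarrow> nat" where
  "rank i = (if i \<in> p ` S then Suc (card {Z\<in>S. Z < inv_into S p i}) else 0)"

lemma unitriangular_row: "unitriangular n row rank"
proof
  show "row i \<in> zvec n" if "i < n" for i
    using that v_zvec by (auto simp: row_def unit_vec_def zvec_def)
  show "row i i = 1" if "i < n" for i
    using v_diag by (auto simp: row_def unit_vec_def)
  show "rank j < rank i" if "i < n" "j < n" "j \<noteq> i" "row i j \<noteq> 0" for i j
  proof (cases "i \<in> p ` S")
    case False
    then show ?thesis
      using that by (simp add: row_def unit_vec_def)
  next
    case True
    then obtain Y where Y: "Y \<in> S" "i = p Y" by blast
    show ?thesis
    proof (cases "j \<in> p ` S")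
      case True
      then obtain Y' where Y': "Y' \<in> S" "j = p Y'" by blast
      then have "Y' < Y"
        using Y that v_off_diag[of Y Y'] by (auto simp: row_def order.order_iff_strict)
      then show ?thesis
        using Y Y' card_down_set_strict_mono[OF finite] by (simp add: rank_def)
    qed (simp add: rank_def True)
  qed
qed

lemma ex_zbasis_superset: "\<exists>B. zbasis n B \<and> v ` S \<subseteq> B"
proof -
  have "v ` S \<subseteq> row ` {..<n}"
  proof
    fix w assume "w \<in> v ` S"
    then obtain Y where Y: "Y \<in> S" "w = v Y" by blast
    then have "row (p Y) = w"
      by (simp add: row_def)
    moreover have "p Y \<in> {..<n}"
      using p_range Y by blast
    ultimately show "w \<in> row ` {..<n}" by blast
  qed
  then show ?thesis
    using unitriangular.zbasis_image[OF unitriangular_row] by blast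
qed

end

lemma maximal_below_inf_eq_bot:
  assumes "building_set G" and g: "g \<in> maximal_below G X" and h: "h \<in> maximal_below G X"
    and "g \<noteq> h"
  shows "inf g h = bot"
proof -
  define M where "M = maximal_below G X"
  have "X \<noteq> bot"
    using assms(1) g unfolding building_set_def maximal_below_def by (auto simp: bot_unique)
  then obtain f where f_bij: "bij_betw f (interval_product M) {Z. bot \<le> Z \<and> Z \<le> X}"
    and f_mono: "\<forall>s\<in>interval_product M. \<forall>t\<in>interval_product M. s \<le> t \<longleftrightarrow> f s \<le> f t"
    and f_unit: "\<forall>k\<in>M. f ((\<lambda>_. bot)(k := k)) = k"
    using assms(1) unfolding building_set_def M_def by blast
  have unit: "(\<lambda>_. bot)(k := k) \<in> interval_product M" if "k \<in> M" for k
    using that unfolding interval_product_def by auto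
  have "inf g h \<le> X"
    using g unfolding maximal_below_def by (auto intro: le_infI1)
  then obtain t where t: "t \<in> interval_product M" "f t = inf g h"
    using f_bij unfolding bij_betw_def by (metis (mono_tags, lifting) bot_least image_iff mem_Collect_eq)
  have "t \<le> (\<lambda>_. bot)(g := g)"
    using f_mono f_unit t unit g unfolding M_def by (metis inf_le1)
  moreover have "t \<le> (\<lambda>_. bot)(h := h)"
    using f_mono f_unit t unit h unfolding M_def by (metis inf_le2)
  ultimately have "t = (\<lambda>_. bot)"
    using \<open>g \<noteq> h\<close> by (auto simp: le_fun_def fun_eq_iff bot_unique split: if_splits)
  obtain s where s: "s \<in> interval_product M" "f s = bot"
    using f_bij unfolding bij_betw_def by (metis (mono_tags, lifting) bot_least image_iff mem_Collect_eq)
  have "t \<le> s"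
    using \<open>t = (\<lambda>_. bot)\<close> by (simp add: le_fun_def)
  then show ?thesis
    using f_mono s t by (metis bot_unique)
qed

lemma ex_maximal_below:
  assumes "finite G" "g \<in> G" "g \<le> X"
  shows "\<exists>h\<in>maximal_below G X. g \<le> h"
proof -
  obtain h where "h \<in> {k\<in>G. k \<le> X}" "g \<le> h" "\<forall>k\<in>{k\<in>G. k \<le> X}. h \<le> k \<longrightarrow> h = k"
    using finite_has_maximal2[of "{k\<in>G. k \<le> X}" g] assms by auto
  then show ?thesis
    unfolding maximal_below_def by (auto simp: less_le)
qed

lemma nested_incomparable_inf_eq_bot:
  assumes "building_set G" "finite G" "nested G S" "g \<in> S" "h \<in> S"
    and "\<not> g \<le> h" "\<not> h \<le> g"
  shows "inf g h = bot"
proof -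
  have "g \<in> G" "h \<in> G"
    using assms(3-5) unfolding nested_def by blast+
  have "g \<noteq> h"
    using assms(6) by blast
  then have "{g, h} \<subseteq> S \<and> 2 \<le> card {g, h} \<and> (\<forall>x\<in>{g, h}. \<forall>y\<in>{g, h}. x \<noteq> y \<longrightarrow> \<not> x \<le> y)"
    using assms(4-7) by auto
  then have "sup g h \<notin> G"
    using assms(3) unfolding nested_def by (metis Sup_insert Sup_empty sup_bot_right)
  obtain g' where g': "g' \<in> maximal_below G (sup g h)" "g \<le> g'"
    using ex_maximal_below[OF assms(2) \<open>g \<in> G\<close>, of "sup g h"] by auto
  obtain h' where h': "h' \<in> maximal_below G (sup g h)" "h \<le> h'"
    using ex_maximal_below[OF assms(2) \<open>h \<in> G\<close>, of "sup g h"] by auto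
  have "g' \<noteq> h'"
  proof
    assume "g' = h'"
    then have "g' = sup g h"
      using g' h' unfolding maximal_below_def by (auto intro: order.antisym)
    then show False
      using \<open>sup g h \<notin> G\<close> g' unfolding maximal_below_def by simp
  qed
  then have "inf g' h' = bot"
    using maximal_below_inf_eq_bot[OF assms(1) g'(1) h'(1)] by blast
  then show ?thesis
    using g'(2) h'(2) inf_mono[of g g' h h'] by (simp add: bot_unique)
qed

lemma Sup_maximal_elements:
  fixes L :: "'a::complete_lattice set"
  assumes "finite L"
  shows "Sup {x\<in>L. \<forall>z\<in>L. x \<le> z \<longrightarrow> x = z} = Sup L"
proof (rule order.antisym)
  show "Sup {x\<in>L. \<forall>z\<in>L. x \<le> z \<longrightarrow> x = z} \<le> Sup L"
    by (rule Sup_subset_mono) blast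
  show "Sup L \<le> Sup {x\<in>L. \<forall>z\<in>L. x \<le> z \<longrightarrow> x = z}"
  proof (rule Sup_least)
    fix x assume "x \<in> L"
    then obtain m where "m \<in> L" "x \<le> m" "\<forall>z\<in>L. m \<le> z \<longrightarrow> m = z"
      using finite_has_maximal2[OF assms] by blast
    then show "x \<le> Sup {x\<in>L. \<forall>z\<in>L. x \<le> z \<longrightarrow> x = z}"
      by (blast intro: Sup_upper2)
  qed
qed

lemma nested_antichain_Sup_memD:
  assumes "nested G S" "bot \<notin> G" "finite T" "T \<subseteq> S"
    and "\<forall>x\<in>T. \<forall>y\<in>T. x \<noteq> y \<longrightarrow> \<not> x \<le> y" "Sup T \<in> G"
  shows "\<exists>x. T = {x}"
proof -
  have "T \<noteq> {}"
    using assms(2,6) by auto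
  then have "card T \<noteq> 0"
    using assms(3) by simp
  moreover have "\<not> 2 \<le> card T"
    using assms(1,4-6) unfolding nested_def by blast
  ultimately have "card T = 1"
    by linarith
  then show ?thesis
    by (rule card_1_singletonE) blast
qed

definition private_atom :: "'a::complete_lattice set \<Rightarrow> 'a \<Rightarrow> 'a \<Rightarrow> bool" where
  "private_atom S Y a \<longleftrightarrow> is_atom a \<and> a \<le> Y \<and> (\<forall>X\<in>S. X < Y \<longrightarrow> \<not> a \<le> X)"

lemma nested_ex_private_atom:
  assumes "atomic_lattice TYPE('a::complete_lattice)" "finite S" "nested G S" "bot \<notin> G"
    and "(Y::'a) \<in> S"
  shows "\<exists>a. private_atom S Y a"
proof (rule ccontr)
  assume no_private: "\<nexists>a. private_atom S Y a"
  define L where "L = {X\<in>S. X < Y}"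
  define T where "T = {x\<in>L. \<forall>z\<in>L. x \<le> z \<longrightarrow> x = z}"
  have "finite L" "T \<subseteq> S"
    using assms(2) by (auto simp: L_def T_def)
  then have "finite T"
    using assms(2) finite_subset by blast
  have "Y = Sup {a. is_atom a \<and> a \<le> Y}"
    using assms(1) unfolding atomic_lattice_def by blast
  also have "\<dots> \<le> Sup L"
  proof (rule Sup_least)
    fix a assume "a \<in> {a. is_atom a \<and> a \<le> Y}"
    then obtain X where "X \<in> L" "a \<le> X"
      using no_private unfolding private_atom_def L_def by auto
    then show "a \<le> Sup L"
      by (rule Sup_upper2)
  qed
  also have "\<dots> = Sup T"
    unfolding T_def using Sup_maximal_elements[OF \<open>finite L\<close>] by simp
  finally have "Y \<le> Sup T" .
  moreover have "Sup T \<le> Y"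
    by (rule Sup_least) (auto simp: T_def L_def)
  ultimately have "Sup T = Y"
    by simp
  moreover have "Y \<in> G"
    using assms(3,5) unfolding nested_def by blast
  moreover have "\<forall>x\<in>T. \<forall>y\<in>T. x \<noteq> y \<longrightarrow> \<not> x \<le> y"
    unfolding T_def by blast
  ultimately obtain x where "T = {x}"
    using nested_antichain_Sup_memD[OF assms(3,4) \<open>finite T\<close> \<open>T \<subseteq> S\<close>] by auto
  then show False
    using \<open>Sup T = Y\<close> unfolding T_def L_def by auto
qed

lemma nested_private_atom_index:
  assumes "atomic_lattice TYPE('a::complete_lattice)" "bij_betw A {..<n} {a::'a. is_atom a}"
    and "finite S" "nested G S" "bot \<notin> G"
  obtains p where "\<And>Y. Y \<in> S \<Longrightarrow> p Y < n \<and> private_atom S Y (A (p Y))"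
proof -
  have "\<exists>i<n. private_atom S Y (A i)" if Y: "Y \<in> S" for Y
  proof -
    obtain a where a: "private_atom S Y a"
      using nested_ex_private_atom[OF assms(1,3-5) Y] by blast
    then have "a \<in> A ` {..<n}"
      using assms(2) unfolding bij_betw_def private_atom_def by simp
    with a show ?thesis
      by auto
  qed
  then show thesis
    using that by metis
qed

lemma nested_le_if_private_atom:
  assumes "building_set G" "finite G" "nested G S" "X \<in> S" "Y \<in> S"
    and "private_atom S X a" "a \<le> Y"
  shows "X \<le> Y"
proof -
  have "a \<le> inf X Y" "bot < a"
    using assms(6,7) unfolding private_atom_def is_atom_def by auto
  then have "X \<le> Y \<or> Y \<le> X"
    using nested_incomparable_inf_eq_bot[OF assms(1-5)] by fastforce
  moreover have "\<not> Y < X"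
    using assms(5-7) unfolding private_atom_def by blast
  ultimately show ?thesis
    by (auto simp: less_le)
qed

theorem proposition5p1:
  fixes A :: "nat \<Rightarrow> 'a::{complete_lattice, finite}" and n :: nat
    and G S :: "'a set"
  assumes "atomic_lattice TYPE('a)"
    and "bij_betw A {..<n} {a. is_atom a}"
    and "building_set G"
    and "nested G S"
  shows "\<exists>B. zbasis n B \<and> vvec A n ` S \<subseteq> B"
proof -
  have "bot \<notin> G"
    using assms(3) unfolding building_set_def by blast
  obtain p where p: "\<And>Y. Y \<in> S \<Longrightarrow> p Y < n \<and> private_atom S Y (A (p Y))"
    using nested_private_atom_index[OF assms(1,2) finite assms(4) \<open>bot \<notin> G\<close>] by blast
  show ?thesis
  proof (rule triangular_family.ex_zbasis_superset, unfold_locales)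
    show "finite S" by simp
    show "p ` S \<subseteq> {..<n}"
      using p by blast
    show "vvec A n Y \<in> zvec n" for Y
      by (simp add: vvec_def zvec_def)
    show "vvec A n Y (p Y) = 1" if "Y \<in> S" for Y
      using p[OF that] by (simp add: vvec_def private_atom_def)
    show "Y' \<le> Y" if "Y \<in> S" "Y' \<in> S" "vvec A n Y (p Y') \<noteq> 0" for Y Y'
      using nested_le_if_private_atom[OF assms(3) finite assms(4) \<open>Y' \<in> S\<close> \<open>Y \<in> S\<close>]
        p[OF \<open>Y' \<in> S\<close>] that(3)
      by (auto simp: vvec_def split: if_splits)
  qed
qed

end
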